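(* Let $\mathcal{A}$ be Suslin, $\Phi\colon\mathcal{A}\to\mathbb{R}$ measurable and semibounded, $\mathcal{Q}$ separable and metrizable, and $\Psi\colon\mathcal{A}\to\mathcal{Q}$ measurable. For measurable $g_1,\dots,g_n\colon\mathcal{Q}\to\mathbb{R}$ and closed (possibly semi-infinite or degenerate) intervals $I_1,\dots,I_n$, let $\mathfrak{Q}:=\{\mathbb{Q}\in\mathcal{M}(\mathcal{Q}):\mathbb{E}_{\mathbb{Q}}[g_i]\in I_i,\ i=1,\dots,n\}$, $\Pi(I):=\{\pi\in\mathcal{M}(\mathcal{A}):\Psi\pi\in\mathfrak{Q}\}$, and $\Pi(I,n):=\Pi(I)\cap\Delta(n)$. Then $\mathcal{U}(\Pi(I))=\mathcal{U}(\Pi(I,n))$, where \[\mathcal{U}(\Pi(I,n))=\sup\Big\{\sum_{i=0}^n\alpha_i\Phi(\mu_i)\ :\ \mu_i\in\mathcal{A},\ \alpha_i\ge0,\ \sum_{i=0}^n\alpha_i=1,\ \sum_{i=0}^n\alpha_ig_j(\Psi(\mu_i))\in I_j\text{ for }j=1,\dots,n\Big\}.\]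
   Context: $\mathcal{M}(\mathcal{Y})$: Borel probability measures; $\Psi\pi$ is the pushforward of $\pi$. Implicit in the definition of $\mathfrak{Q}$ is that all $n$ integrals exist. $\Delta(n):=\{\sum_{i=0}^n\alpha_i\delta_{\mu_i}:\mu_i\in\mathcal{A},\alpha_i\ge0\}$. For $\Pi\subseteq\mathcal{M}(\mathcal{A})$, $\mathcal{U}(\Pi):=\sup_{\pi\in\Pi}\mathbb{E}_\pi[\Phi]$, with $\sup\varnothing=-\infty$. *)

theory Defs
  imports "HOL-Probability.Probability"
begin

definition borel_probs :: "'y::topological_space measure set" where
  "borel_probs = {M. sets M = sets borel \<and> prob_space M}"

(* Expectation in the extended reals (exists for semibounded f) *)
definition ereal_expect :: "'y measure \<Rightarrow> ('y \<Rightarrow> real) \<Rightarrow> ereal" where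
  "ereal_expect M f =
     enn2ereal (\<integral>\<^sup>+ x. ennreal (f x) \<partial>M) - enn2ereal (\<integral>\<^sup>+ x. ennreal (- f x) \<partial>M)"

(* U(Pi) = sup of E_pi[Phi] over Pi, with sup {} = -infinity *)
definition U_val :: "('y \<Rightarrow> real) \<Rightarrow> 'y measure set \<Rightarrow> ereal" where
  "U_val Phi PP = (SUP pi\<in>PP. ereal_expect pi Phi)"

definition closed_interval :: "real set \<Rightarrow> bool" where
  "closed_interval S \<longleftrightarrow> (\<exists>a b. a \<le> b \<and> S = {a..b}) \<or> (\<exists>a. S = {a..}) \<or> (\<exists>b. S = {..b})"

definition Qfrak :: "nat \<Rightarrow> (nat \<Rightarrow> 'q::topological_space \<Rightarrow> real) \<Rightarrow> (nat \<Rightarrow> real set) \<Rightarrow> 'q measure set" where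
  "Qfrak n g I = {Q \<in> borel_probs. \<forall>j\<in>{1..n}. integrable Q (g j) \<and> (\<integral>x. g j x \<partial>Q) \<in> I j}"

definition PiI :: "nat \<Rightarrow> ('a::topological_space \<Rightarrow> 'q::topological_space) \<Rightarrow> (nat \<Rightarrow> 'q \<Rightarrow> real) \<Rightarrow> (nat \<Rightarrow> real set) \<Rightarrow> 'a measure set" where
  "PiI n Psi g I = {pi \<in> borel_probs. distr pi borel Psi \<in> Qfrak n g I}"

definition Delta :: "nat \<Rightarrow> 'a::topological_space measure set" where
  "Delta n = {pi. sets pi = sets borel \<and> (\<exists>mu alpha. (\<forall>i\<le>n. alpha i \<ge> (0::real)) \<and>
      (\<forall>S\<in>sets borel. emeasure pi S = ennreal (\<Sum>i\<le>n. alpha i * indicator S (mu i))))}"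

end

theory Submission
  imports Defs
begin

text \<open>
  The integrals of finitely many integrable functions under a probability measure are matched by a
  finitely supported probability measure (Richter): either the cone generated by the centred values
  contains \<open>0\<close>, or a separating functional is nonnegative with integral \<open>0\<close>, hence vanishes almost
  everywhere, and one restricts the measure to its zero set and drops one function.  Caratheodory
  elimination then cuts the support to \<open>n + 1\<close> points, keeping the total mass and the \<open>n\<close> moment
  constraints, without decreasing the sum of a given function.  Applied to an integrable minorant of
  \<open>\<Phi>\<close> whose integral is close to \<open>E\<^sub>\<pi>[\<Phi>]\<close> (a truncation, which exists since \<open>\<Phi>\<close> is
  semibounded), this bounds every \<open>E\<^sub>\<pi>[\<Phi>]\<close>, \<open>\<pi> \<in> \<Pi>(I)\<close>, by the discrete values; conversely
  every admissible discrete measure lies in \<open>\<Pi>(I) \<inter> \<Delta>(n)\<close>.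
\<close>

section \<open>Caratheodory reduction of finite weightings\<close>

lemma gaussian_elimination_step:
  fixes a :: "'j \<Rightarrow> 'x \<Rightarrow> real"
  assumes "finite S" "x0 \<in> S" "a k x0 \<noteq> 0"
    and reduced: "\<forall>j\<in>J. (\<Sum>x\<in>S - {x0}. w0 x * (a j x - a j x0 * a k x / a k x0)) = 0"
  defines "w \<equiv> w0(x0 := - (\<Sum>x\<in>S - {x0}. w0 x * a k x) / a k x0)"
  shows "\<forall>j\<in>insert k J. (\<Sum>x\<in>S. w x * a j x) = 0"
proof -
  have sum_S: "(\<Sum>x\<in>S. w x * f x) = w x0 * f x0 + (\<Sum>x\<in>S - {x0}. w0 x * f x)" for f
  proof -
    have "(\<Sum>x\<in>S. w x * f x) = w x0 * f x0 + (\<Sum>x\<in>S - {x0}. w x * f x)"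
      using assms(1,2) by (simp add: sum.remove)
    also have "(\<Sum>x\<in>S - {x0}. w x * f x) = (\<Sum>x\<in>S - {x0}. w0 x * f x)"
      by (intro sum.cong) (auto simp: w_def)
    finally show ?thesis .
  qed
  have eliminated: "(\<Sum>x\<in>S - {x0}. w0 x * a j x) = a j x0 / a k x0 * (\<Sum>x\<in>S - {x0}. w0 x * a k x)"
    if "j \<in> J" for j
  proof -
    have "(\<Sum>x\<in>S - {x0}. w0 x * (a j x - a j x0 * a k x / a k x0))
        = (\<Sum>x\<in>S - {x0}. w0 x * a j x) - a j x0 / a k x0 * (\<Sum>x\<in>S - {x0}. w0 x * a k x)"
      by (simp add: sum_subtractf sum_distrib_left algebra_simps)
    then show ?thesis using reduced that by simp
  qed
  show ?thesis
  proof
    fix j assume "j \<in> insert k J"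
    then show "(\<Sum>x\<in>S. w x * a j x) = 0"
    proof
      assume "j = k"
      then show ?thesis using assms(3) by (simp only: sum_S) (simp add: w_def)
    next
      assume "j \<in> J"
      then show ?thesis using eliminated assms(3) by (simp only: sum_S) (simp add: w_def field_simps)
    qed
  qed
qed

lemma homogeneous_system_nontrivial_solution:
  fixes a :: "'j \<Rightarrow> 'x \<Rightarrow> real"
  assumes "finite J" "finite S" "card J < card S"
  shows "\<exists>w. (\<exists>x\<in>S. w x \<noteq> 0) \<and> (\<forall>j\<in>J. (\<Sum>x\<in>S. w x * a j x) = 0)"
  using assms
proof (induction J arbitrary: S a rule: finite_induct)
  case empty
  then obtain x0 where "x0 \<in> S" by fastforce
  then show ?case by (intro exI[of _ "\<lambda>_. 1"]) auto
next
  case (insert k J)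
  show ?case
  proof (cases "\<forall>x\<in>S. a k x = 0")
    case True
    obtain w where "\<exists>x\<in>S. w x \<noteq> 0" "\<forall>j\<in>J. (\<Sum>x\<in>S. w x * a j x) = 0"
      using insert.IH[of S a] insert.hyps insert.prems by auto
    then show ?thesis using True by (intro exI[of _ w]) auto
  next
    case False
    then obtain x0 where x0: "x0 \<in> S" "a k x0 \<noteq> 0" by blast
    have "card J < card (S - {x0})" using insert.hyps insert.prems x0 by simp
    then obtain w0 where w0: "\<exists>x\<in>S - {x0}. w0 x \<noteq> 0"
        "\<forall>j\<in>J. (\<Sum>x\<in>S - {x0}. w0 x * (a j x - a j x0 * a k x / a k x0)) = 0"
      using insert.IH[of "S - {x0}" "\<lambda>j x. a j x - a j x0 * a k x / a k x0"] insert.prems by auto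
    define w where "w = w0(x0 := - (\<Sum>x\<in>S - {x0}. w0 x * a k x) / a k x0)"
    have "\<exists>x\<in>S. w x \<noteq> 0" using w0(1) by (auto simp: w_def)
    moreover have "\<forall>j\<in>insert k J. (\<Sum>x\<in>S. w x * a j x) = 0"
      unfolding w_def using insert.prems(1) x0 w0(2) by (rule gaussian_elimination_step)
    ultimately show ?thesis by blast
  qed
qed

lemma nonneg_step_to_boundary:
  fixes \<alpha> w :: "'x \<Rightarrow> real"
  assumes "finite S" "\<forall>x\<in>S. 0 \<le> \<alpha> x" "\<exists>x\<in>S. w x < 0"
  shows "\<exists>t z. 0 \<le> t \<and> z \<in> S \<and> \<alpha> z + t * w z = 0 \<and> (\<forall>x\<in>S. 0 \<le> \<alpha> x + t * w x)"
proof -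
  define T where "T = (\<lambda>x. \<alpha> x / - w x) ` {x\<in>S. w x < 0}"
  have T: "finite T" "T \<noteq> {}" using assms(1,3) by (auto simp: T_def)
  obtain z where z: "z \<in> S" "w z < 0" "Min T = \<alpha> z / - w z"
    using Min_in[OF T] by (auto simp: T_def)
  have "0 \<le> Min T" using z assms(2) by (simp add: divide_nonneg_neg)
  moreover have "0 \<le> \<alpha> x + Min T * w x" if "x \<in> S" for x
  proof (cases "w x < 0")
    case True
    then have "Min T \<le> \<alpha> x / - w x" using T that by (auto simp: T_def)
    then show ?thesis using True by (simp add: field_simps)
  next
    case False
    then show ?thesis using that assms(2) \<open>0 \<le> Min T\<close> by simp
  qed
  moreover have "\<alpha> z + Min T * w z = 0" using z by (simp add: field_simps)
  ultimately show ?thesis using z(1) by blast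
qed

lemma caratheodory_step:
  fixes a :: "'j \<Rightarrow> 'x \<Rightarrow> real" and \<psi> :: "'x \<Rightarrow> real"
  assumes "finite J" "finite S" "Suc (card J) < card S" "\<forall>x\<in>S. 0 \<le> \<alpha> x"
  shows "\<exists>\<beta> z. z \<in> S \<and> \<beta> z = 0 \<and> (\<forall>x\<in>S. 0 \<le> \<beta> x) \<and> sum \<beta> S = sum \<alpha> S \<and>
           (\<forall>j\<in>J. (\<Sum>x\<in>S. \<beta> x * a j x) = (\<Sum>x\<in>S. \<alpha> x * a j x)) \<and>
           (\<Sum>x\<in>S. \<alpha> x * \<psi> x) \<le> (\<Sum>x\<in>S. \<beta> x * \<psi> x)"
proof -
  \<comment> \<open>The extra equation with coefficients \<open>1\<close> makes the kernel vector preserve the total weight.\<close>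
  define J' where "J' = insert None (Some ` J)"
  define a' where "a' = case_option (\<lambda>_. 1) a"
  have "card J' = Suc (card J)" using assms(1) by (simp add: J'_def card_image)
  then obtain v where v: "\<exists>x\<in>S. v x \<noteq> 0" "\<forall>j\<in>J'. (\<Sum>x\<in>S. v x * a' j x) = 0"
    using homogeneous_system_nontrivial_solution[of J' S a'] assms by (auto simp: J'_def)
  \<comment> \<open>Orient the kernel vector so that moving along it does not decrease the \<open>\<psi>\<close>-sum.\<close>
  define s :: real where "s = (if 0 \<le> (\<Sum>x\<in>S. v x * \<psi> x) then 1 else -1)"
  define w where "w = (\<lambda>x. s * v x)"
  have w_lin: "(\<Sum>x\<in>S. w x * f x) = s * (\<Sum>x\<in>S. v x * f x)" for f
    by (simp add: w_def sum_distrib_left mult.assoc)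
  have w_sum: "sum w S = 0" using w_lin[of "\<lambda>_. 1"] v(2) by (simp add: J'_def a'_def)
  have "\<exists>x\<in>S. w x < 0"
  proof (rule ccontr)
    assume "\<not> ?thesis"
    then have "\<forall>x\<in>S. w x = 0" using w_sum sum_nonneg_eq_0_iff[OF assms(2)] by (meson not_le)
    then show False using v(1) by (auto simp: w_def s_def split: if_splits)
  qed
  then obtain t z where t: "0 \<le> t" "z \<in> S" "\<alpha> z + t * w z = 0" "\<forall>x\<in>S. 0 \<le> \<alpha> x + t * w x"
    using nonneg_step_to_boundary[OF assms(2,4)] by blast
  define \<beta> where "\<beta> = (\<lambda>x. \<alpha> x + t * w x)"
  have \<beta>_lin: "(\<Sum>x\<in>S. \<beta> x * f x) = (\<Sum>x\<in>S. \<alpha> x * f x) + t * (\<Sum>x\<in>S. w x * f x)" for f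
    by (simp add: \<beta>_def algebra_simps sum.distrib sum_distrib_left)
  have "sum \<beta> S = sum \<alpha> S" using \<beta>_lin[of "\<lambda>_. 1"] w_sum by simp
  moreover have "(\<Sum>x\<in>S. \<beta> x * a j x) = (\<Sum>x\<in>S. \<alpha> x * a j x)" if "j \<in> J" for j
    using \<beta>_lin[of "a j"] w_lin[of "a j"] v(2) that by (simp add: J'_def a'_def)
  moreover have "(\<Sum>x\<in>S. \<alpha> x * \<psi> x) \<le> (\<Sum>x\<in>S. \<beta> x * \<psi> x)"
    using \<beta>_lin[of \<psi>] w_lin[of \<psi>] t(1) by (simp add: s_def)
  ultimately show ?thesis using t(2-4) by (intro exI[of _ \<beta>] exI[of _ z]) (auto simp: \<beta>_def)
qed

lemma caratheodory_reduction:
  fixes a :: "'j \<Rightarrow> 'x \<Rightarrow> real" and \<psi> :: "'x \<Rightarrow> real"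
  assumes "finite J" "finite S" "\<forall>x\<in>S. 0 \<le> \<alpha> x"
  shows "\<exists>S' \<beta>. S' \<subseteq> S \<and> card S' \<le> Suc (card J) \<and> (\<forall>x\<in>S'. 0 \<le> \<beta> x) \<and>
           sum \<beta> S' = sum \<alpha> S \<and> (\<forall>j\<in>J. (\<Sum>x\<in>S'. \<beta> x * a j x) = (\<Sum>x\<in>S. \<alpha> x * a j x)) \<and>
           (\<Sum>x\<in>S. \<alpha> x * \<psi> x) \<le> (\<Sum>x\<in>S'. \<beta> x * \<psi> x)"
  using assms(2,3)
proof (induction S arbitrary: \<alpha> rule: finite_psubset_induct)
  case (psubset S)
  show ?case
  proof (cases "card S \<le> Suc (card J)")
    case True
    then show ?thesis using psubset.prems by (intro exI[of _ S] exI[of _ \<alpha>]) auto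
  next
    case False
    then obtain \<beta> z where \<beta>: "z \<in> S" "\<beta> z = 0" "\<forall>x\<in>S. 0 \<le> \<beta> x" "sum \<beta> S = sum \<alpha> S"
        "\<forall>j\<in>J. (\<Sum>x\<in>S. \<beta> x * a j x) = (\<Sum>x\<in>S. \<alpha> x * a j x)"
        "(\<Sum>x\<in>S. \<alpha> x * \<psi> x) \<le> (\<Sum>x\<in>S. \<beta> x * \<psi> x)"
      using caratheodory_step[OF assms(1) psubset.hyps(1) _ psubset.prems, of a \<psi>] by auto
    have drop_z: "(\<Sum>x\<in>S - {z}. \<beta> x * f x) = (\<Sum>x\<in>S. \<beta> x * f x)" for f
      using \<beta>(1,2) psubset.hyps(1) by (simp add: sum.remove)
    have "sum \<beta> (S - {z}) = sum \<beta> S" using drop_z[of "\<lambda>_. 1"] by simp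
    moreover obtain S' \<beta>' where "S' \<subseteq> S - {z}" "card S' \<le> Suc (card J)" "\<forall>x\<in>S'. 0 \<le> \<beta>' x"
        "sum \<beta>' S' = sum \<beta> (S - {z})"
        "\<forall>j\<in>J. (\<Sum>x\<in>S'. \<beta>' x * a j x) = (\<Sum>x\<in>S - {z}. \<beta> x * a j x)"
        "(\<Sum>x\<in>S - {z}. \<beta> x * \<psi> x) \<le> (\<Sum>x\<in>S'. \<beta>' x * \<psi> x)"
      using psubset.IH[of "S - {z}" \<beta>] \<beta>(1,3) by blast
    ultimately show ?thesis using \<beta> drop_z by (intro exI[of _ S'] exI[of _ \<beta>']) auto
  qed
qed

lemma weighted_sum_reindex_atMost:
  fixes \<beta> :: "'x \<Rightarrow> real"
  assumes "finite S" "S \<noteq> {}" "card S \<le> Suc n" "\<forall>x\<in>S. 0 \<le> \<beta> x"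
  shows "\<exists>mu alpha. (\<forall>i\<le>n. 0 \<le> alpha i) \<and> (\<forall>i\<le>n. mu i \<in> S) \<and>
           (\<forall>F. (\<Sum>i\<le>n. alpha i * F (mu i)) = (\<Sum>x\<in>S. \<beta> x * F x))"
proof -
  obtain e where e: "bij_betw e {..<card S} S"
    using ex_bij_betw_nat_finite assms(1) atLeast0LessThan by metis
  obtain x0 where x0: "x0 \<in> S" using assms(2) by blast
  define mu where "mu = (\<lambda>i. if i < card S then e i else x0)"
  define alpha where "alpha = (\<lambda>i. if i < card S then \<beta> (e i) else 0)"
  have eS: "e i \<in> S" if "i < card S" for i using e that bij_betwE by blast
  show ?thesis
  proof (intro exI[of _ mu] exI[of _ alpha] conjI allI impI)
    show "0 \<le> alpha i" for i using eS assms(4) by (simp add: alpha_def)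
    show "mu i \<in> S" for i using eS x0 by (simp add: mu_def)
    fix F :: "'x \<Rightarrow> real"
    have "(\<Sum>i\<le>n. alpha i * F (mu i)) = (\<Sum>i\<le>n. if i < card S then \<beta> (e i) * F (e i) else 0)"
      by (intro sum.cong) (auto simp: alpha_def mu_def)
    also have "\<dots> = (\<Sum>i<card S. \<beta> (e i) * F (e i))"
    proof -
      have "{..n} \<inter> {..<card S} = {..<card S}" using assms(3) by auto
      then show ?thesis
        using sum.inter_restrict[of "{..n}" "\<lambda>i. \<beta> (e i) * F (e i)" "{..<card S}"] by simp
    qed
    also have "\<dots> = (\<Sum>x\<in>S. \<beta> x * F x)"
      using sum.reindex_bij_betw[OF e, of "\<lambda>x. \<beta> x * F x"] by simp
    finally show "(\<Sum>i\<le>n. alpha i * F (mu i)) = (\<Sum>x\<in>S. \<beta> x * F x)" .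
  qed
qed

section \<open>Nonnegative functionals on cones\<close>

lemma cone_eliminate_coordinate:
  fixes K :: "('i \<Rightarrow> real) set"
  assumes add: "\<And>u v. u \<in> K \<Longrightarrow> v \<in> K \<Longrightarrow> (\<lambda>j. u j + v j) \<in> K"
    and scale: "\<And>u c. u \<in> K \<Longrightarrow> 0 < c \<Longrightarrow> (\<lambda>j. c * u j) \<in> K"
    and "v \<in> K" "y \<in> K" "0 < v k" "y k < 0"
  shows "(\<lambda>j. - y k * v j + v k * y j) \<in> K"
  using add[OF scale[of v "- y k"] scale[of y "v k"]] assms(3-) by simp

lemma cone_slice_ratio_bound:
  fixes K :: "('i \<Rightarrow> real) set" and l :: "'i \<Rightarrow> real"
  assumes add: "\<And>u v. u \<in> K \<Longrightarrow> v \<in> K \<Longrightarrow> (\<lambda>j. u j + v j) \<in> K"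
    and scale: "\<And>u c. u \<in> K \<Longrightarrow> 0 < c \<Longrightarrow> (\<lambda>j. c * u j) \<in> K"
    and slice: "\<And>v. v \<in> K \<Longrightarrow> v k = 0 \<Longrightarrow> 0 \<le> (\<Sum>j\<in>J. l j * v j)"
    and "v \<in> K" "y \<in> K" "0 < v k" "y k < 0"
  shows "- (\<Sum>j\<in>J. l j * v j) / v k \<le> (\<Sum>j\<in>J. l j * y j) / - y k"
proof -
  have linear: "(\<Sum>j\<in>J. l j * (a * v j + b * y j)) = a * (\<Sum>j\<in>J. l j * v j) + b * (\<Sum>j\<in>J. l j * y j)"
    for a b by (simp add: sum.distrib sum_distrib_left distrib_left mult.left_commute)
  have "(\<lambda>j. - y k * v j + v k * y j) \<in> K"
    using add scale assms(4-) by (rule cone_eliminate_coordinate)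
  then have "0 \<le> (\<Sum>j\<in>J. l j * (- y k * v j + v k * y j))" by (rule slice) simp
  also have "\<dots> = - y k * (\<Sum>j\<in>J. l j * v j) + v k * (\<Sum>j\<in>J. l j * y j)"
    by (rule linear)
  finally show ?thesis using assms(6,7) by (simp add: field_simps)
qed

lemma cone_functional_extend:
  fixes K :: "('i \<Rightarrow> real) set" and l :: "'i \<Rightarrow> real"
  assumes add: "\<And>u v. u \<in> K \<Longrightarrow> v \<in> K \<Longrightarrow> (\<lambda>j. u j + v j) \<in> K"
    and scale: "\<And>u c. u \<in> K \<Longrightarrow> 0 < c \<Longrightarrow> (\<lambda>j. c * u j) \<in> K"
    and slice: "\<And>v. v \<in> K \<Longrightarrow> v k = 0 \<Longrightarrow> 0 \<le> (\<Sum>j\<in>J. l j * v j)"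
    and pos: "x0 \<in> K" "0 < x0 k" and neg: "y0 \<in> K" "y0 k < 0"
  shows "\<exists>c. \<forall>v\<in>K. 0 \<le> c * v k + (\<Sum>j\<in>J. l j * v j)"
proof -
  define L where "L v = (\<Sum>j\<in>J. l j * v j)" for v :: "'i \<Rightarrow> real"
  have ratio: "- L v / v k \<le> L y / - y k" if "v \<in> K" "y \<in> K" "0 < v k" "y k < 0" for v y
    unfolding L_def using add scale slice that by (rule cone_slice_ratio_bound)
  define B where "B = {- L v / v k | v. v \<in> K \<and> 0 < v k}"
  have "B \<noteq> {}" using pos by (auto simp: B_def)
  have B_le: "b \<le> L y / - y k" if "b \<in> B" "y \<in> K" "y k < 0" for b y
  proof -
    obtain u where u: "u \<in> K" "0 < u k" "b = - L u / u k" using \<open>b \<in> B\<close> by (auto simp: B_def)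
    then show ?thesis using ratio[OF u(1) that(2) u(2) that(3)] by simp
  qed
  have "bdd_above B" using B_le neg by (intro bdd_aboveI) blast
  have "0 \<le> Sup B * v k + L v" if v: "v \<in> K" for v
  proof -
    consider "0 < v k" | "v k < 0" | "v k = 0" by linarith
    then show ?thesis
    proof cases
      case 1
      then have "- L v / v k \<le> Sup B"
        using v \<open>bdd_above B\<close> by (intro cSup_upper) (auto simp: B_def)
      then show ?thesis using 1 by (simp add: field_simps)
    next
      case 2
      then have "Sup B \<le> L v / - v k"
        using v \<open>B \<noteq> {}\<close> B_le by (intro cSup_least) blast
      then show ?thesis using 2 by (simp add: field_simps)
    next
      case 3
      then show ?thesis using slice[OF v] by (simp add: L_def)
    qed
  qed
  then show ?thesis unfolding L_def by blast
qed

lemma sum_insert_fun_upd: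
  fixes l v :: "'i \<Rightarrow> real"
  assumes "finite J" "k \<notin> J"
  shows "(\<Sum>j\<in>insert k J. (l(k := c)) j * v j) = c * v k + (\<Sum>j\<in>J. l j * v j)"
proof -
  have "(\<Sum>j\<in>J. (l(k := c)) j * v j) = (\<Sum>j\<in>J. l j * v j)" using assms(2) by (intro sum.cong) auto
  then show ?thesis using assms by simp
qed

lemma cone_mixed_sign_functional:
  fixes K :: "('i \<Rightarrow> real) set"
  assumes add: "\<And>u v. u \<in> K \<Longrightarrow> v \<in> K \<Longrightarrow> (\<lambda>j. u j + v j) \<in> K"
    and scale: "\<And>u c. u \<in> K \<Longrightarrow> 0 < c \<Longrightarrow> (\<lambda>j. c * u j) \<in> K"
    and avoid: "\<And>v. v \<in> K \<Longrightarrow> \<exists>j\<in>insert k J. v j \<noteq> 0"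
    and J: "finite J" "k \<notin> J"
    and pos: "x0 \<in> K" "0 < x0 k" and neg: "y0 \<in> K" "y0 k < 0"
    and l: "J \<noteq> {} \<longrightarrow> (\<exists>j\<in>J. l j \<noteq> 0)" "\<And>v. v \<in> K \<Longrightarrow> v k = 0 \<Longrightarrow> 0 \<le> (\<Sum>j\<in>J. l j * v j)"
  shows "\<exists>l'. (\<exists>j\<in>insert k J. l' j \<noteq> 0) \<and> (\<forall>v\<in>K. 0 \<le> (\<Sum>j\<in>insert k J. l' j * v j))"
proof -
  obtain c where c: "\<forall>v\<in>K. 0 \<le> c * v k + (\<Sum>j\<in>J. l j * v j)"
    using cone_functional_extend[OF add scale l(2) pos neg] by blast
  have "J \<noteq> {}"
  proof
    assume "J = {}"
    have "(\<lambda>j. - y0 k * x0 j + x0 k * y0 j) \<in> K"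
      using add scale pos(1) neg(1) pos(2) neg(2) by (rule cone_eliminate_coordinate)
    from avoid[OF this] show False using \<open>J = {}\<close> by (simp add: mult.commute)
  qed
  show ?thesis
  proof (intro exI[of _ "l(k := c)"] conjI ballI)
    show "\<exists>j\<in>insert k J. (l(k := c)) j \<noteq> 0"
      using l(1) \<open>J \<noteq> {}\<close> J(2) by (metis fun_upd_other insertCI)
    show "0 \<le> (\<Sum>j\<in>insert k J. (l(k := c)) j * v j)" if "v \<in> K" for v
      using c that by (simp only: sum_insert_fun_upd[OF J])
  qed
qed

lemma cone_nonneg_functional:
  fixes K :: "('i \<Rightarrow> real) set"
  assumes "finite J"
    and add: "\<And>u v. u \<in> K \<Longrightarrow> v \<in> K \<Longrightarrow> (\<lambda>j. u j + v j) \<in> K"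
    and scale: "\<And>u c. u \<in> K \<Longrightarrow> 0 < c \<Longrightarrow> (\<lambda>j. c * u j) \<in> K"
    and avoid: "\<And>v. v \<in> K \<Longrightarrow> \<exists>j\<in>J. v j \<noteq> 0"
  shows "\<exists>l. (J \<noteq> {} \<longrightarrow> (\<exists>j\<in>J. l j \<noteq> 0)) \<and> (\<forall>v\<in>K. 0 \<le> (\<Sum>j\<in>J. l j * v j))"
  using assms
proof (induction J arbitrary: K rule: finite_induct)
  case empty
  then show ?case by auto
next
  case (insert k J)
  note sum_upd = sum_insert_fun_upd[OF insert.hyps]
  show ?case
  proof (cases "(\<forall>v\<in>K. 0 \<le> v k) \<or> (\<forall>v\<in>K. v k \<le> 0)")
    case True
    then obtain s :: real where s: "s \<noteq> 0" "\<forall>v\<in>K. 0 \<le> s * v k"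
    proof
      assume "\<forall>v\<in>K. 0 \<le> v k"
      then show ?thesis using that[of 1] by simp
    next
      assume "\<forall>v\<in>K. v k \<le> 0"
      then show ?thesis using that[of "-1"] by simp
    qed
    show ?thesis
    proof (intro exI[of _ "(\<lambda>_. 0)(k := s)"] conjI impI ballI)
      show "0 \<le> (\<Sum>j\<in>insert k J. ((\<lambda>_. 0)(k := s)) j * v j)" if "v \<in> K" for v
        using s(2) that by (simp only: sum_upd) simp
    qed (use s(1) in simp)
  next
    case False
    then obtain x0 y0 where x0: "x0 \<in> K" "0 < x0 k" and y0: "y0 \<in> K" "y0 k < 0"
      by (auto simp: not_le)
    define L where "L = {v\<in>K. v k = 0}"
    obtain l where l: "J \<noteq> {} \<longrightarrow> (\<exists>j\<in>J. l j \<noteq> 0)" "\<forall>v\<in>L. 0 \<le> (\<Sum>j\<in>J. l j * v j)"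
    proof (rule insert.IH[of L, elim_format])
      show "(\<lambda>j. u j + v j) \<in> L" if "u \<in> L" "v \<in> L" for u v
        using that insert.prems(1) by (simp add: L_def)
      show "(\<lambda>j. c * u j) \<in> L" if "u \<in> L" "0 < c" for u c
        using that insert.prems(2) by (simp add: L_def)
      show "\<exists>j\<in>J. v j \<noteq> 0" if "v \<in> L" for v
        using that insert.prems(3)[of v] by (auto simp: L_def)
    qed blast
    have slice: "0 \<le> (\<Sum>j\<in>J. l j * v j)" if "v \<in> K" "v k = 0" for v
      using l(2) that by (simp add: L_def)
    show ?thesis
      using cone_mixed_sign_functional[OF insert.prems insert.hyps x0 y0 l(1) slice] by blast
  qed
qed

section \<open>Richter's theorem\<close>

lemma sum_zero_extension:
  fixes a f :: "'x \<Rightarrow> real"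
  assumes "finite T" "S \<subseteq> T"
  shows "(\<Sum>x\<in>T. (if x \<in> S then a x else 0) * f x) = (\<Sum>x\<in>S. a x * f x)"
  using assms by (intro sum.mono_neutral_cong_right) auto

definition generated_cone :: "'x set \<Rightarrow> ('j \<Rightarrow> 'x \<Rightarrow> real) \<Rightarrow> ('j \<Rightarrow> real) set" where
  "generated_cone X h = {(\<lambda>j. \<Sum>x\<in>S. \<alpha> x * h j x) | S \<alpha>.
      finite S \<and> S \<subseteq> X \<and> (\<forall>x\<in>S. 0 \<le> \<alpha> x) \<and> 0 < sum \<alpha> S}"

lemma generated_cone_add:
  assumes "u \<in> generated_cone X h" "v \<in> generated_cone X h"
  shows "(\<lambda>j. u j + v j) \<in> generated_cone X h"
proof -
  obtain S1 \<alpha>1 where 1: "finite S1" "S1 \<subseteq> X" "\<forall>x\<in>S1. 0 \<le> \<alpha>1 x" "0 < sum \<alpha>1 S1"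
    "u = (\<lambda>j. \<Sum>x\<in>S1. \<alpha>1 x * h j x)" using assms(1) by (auto simp: generated_cone_def)
  obtain S2 \<alpha>2 where 2: "finite S2" "S2 \<subseteq> X" "\<forall>x\<in>S2. 0 \<le> \<alpha>2 x" "0 < sum \<alpha>2 S2"
    "v = (\<lambda>j. \<Sum>x\<in>S2. \<alpha>2 x * h j x)" using assms(2) by (auto simp: generated_cone_def)
  define \<alpha> where "\<alpha> x = (if x \<in> S1 then \<alpha>1 x else 0) + (if x \<in> S2 then \<alpha>2 x else 0)" for x
  have split: "(\<Sum>x\<in>S1 \<union> S2. \<alpha> x * f x) = (\<Sum>x\<in>S1. \<alpha>1 x * f x) + (\<Sum>x\<in>S2. \<alpha>2 x * f x)" for f
    using 1(1) 2(1) by (simp add: \<alpha>_def distrib_right sum.distrib sum_zero_extension)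
  have "(\<lambda>j. u j + v j) = (\<lambda>j. \<Sum>x\<in>S1 \<union> S2. \<alpha> x * h j x)" by (simp add: 1(5) 2(5) split)
  moreover have "0 < sum \<alpha> (S1 \<union> S2)" using split[of "\<lambda>_. 1"] 1(4) 2(4) by simp
  moreover have "\<forall>x\<in>S1 \<union> S2. 0 \<le> \<alpha> x" using 1(3) 2(3) by (simp add: \<alpha>_def)
  ultimately show ?thesis using 1(1,2) 2(1,2) unfolding generated_cone_def by blast
qed

lemma generated_cone_scale:
  assumes "u \<in> generated_cone X h" "0 < c"
  shows "(\<lambda>j. c * u j) \<in> generated_cone X h"
proof -
  obtain S \<alpha> where S: "finite S" "S \<subseteq> X" "\<forall>x\<in>S. 0 \<le> \<alpha> x" "0 < sum \<alpha> S"
    "u = (\<lambda>j. \<Sum>x\<in>S. \<alpha> x * h j x)" using assms(1) by (auto simp: generated_cone_def)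
  have "(\<lambda>j. c * u j) = (\<lambda>j. \<Sum>x\<in>S. (c * \<alpha> x) * h j x)"
    by (simp add: S(5) sum_distrib_left mult.assoc)
  moreover have "0 < sum (\<lambda>x. c * \<alpha> x) S" using S(4) assms(2) by (simp add: sum_distrib_left[symmetric])
  ultimately show ?thesis using S(1-3) assms(2) unfolding generated_cone_def by fastforce
qed

lemma generated_cone_point:
  assumes "x \<in> X"
  shows "(\<lambda>j. h j x) \<in> generated_cone X h"
  using assms unfolding generated_cone_def
  by (intro CollectI exI[of _ "{x}"] exI[of _ "\<lambda>_. 1"]) auto

lemma generated_cone_vanishing_imp_convex_combination:
  assumes "v \<in> generated_cone X h" "\<forall>j\<in>J. v j = 0"
  shows "\<exists>S \<alpha>. finite S \<and> S \<subseteq> X \<and> (\<forall>x\<in>S. 0 \<le> \<alpha> x) \<and> sum \<alpha> S = 1 \<and>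
           (\<forall>j\<in>J. (\<Sum>x\<in>S. \<alpha> x * h j x) = 0)"
proof -
  obtain S \<alpha> where S: "finite S" "S \<subseteq> X" "\<forall>x\<in>S. 0 \<le> \<alpha> x" "0 < sum \<alpha> S"
    "v = (\<lambda>j. \<Sum>x\<in>S. \<alpha> x * h j x)" using assms(1) by (auto simp: generated_cone_def)
  have "(\<Sum>x\<in>S. \<alpha> x / sum \<alpha> S * h j x) = v j / sum \<alpha> S" for j
    by (simp add: S(5) sum_divide_distrib)
  moreover have "sum (\<lambda>x. \<alpha> x / sum \<alpha> S) S = 1" using S(4) by (simp add: sum_divide_distrib[symmetric])
  ultimately show ?thesis using S(1-4) assms(2)
    by (intro exI[of _ S] exI[of _ "\<lambda>x. \<alpha> x / sum \<alpha> S"]) auto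
qed

lemma vanishing_functional_isolates_coordinate:
  fixes l :: "'j \<Rightarrow> real" and h :: "'j \<Rightarrow> 'x \<Rightarrow> real"
  assumes "finite J" "r \<in> J" "l r \<noteq> 0"
    and "\<forall>x\<in>S. (\<Sum>j\<in>J. l j * h j x) = 0" "\<forall>j\<in>J - {r}. (\<Sum>x\<in>S. \<alpha> x * h j x) = 0"
  shows "(\<Sum>x\<in>S. \<alpha> x * h r x) = 0"
proof -
  have "0 = (\<Sum>x\<in>S. \<alpha> x * (\<Sum>j\<in>J. l j * h j x))" using assms(4) by simp
  also have "\<dots> = (\<Sum>j\<in>J. l j * (\<Sum>x\<in>S. \<alpha> x * h j x))"
    by (simp add: sum_distrib_left mult.left_commute sum.swap[of _ S])
  also have "\<dots> = l r * (\<Sum>x\<in>S. \<alpha> x * h r x)" using assms(1,2,5) by (simp add: sum.remove)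
  finally show ?thesis using assms(3) by simp
qed

lemma prob_space_restrict_space_AE:
  assumes "prob_space M" "A \<in> sets M" "AE x in M. x \<in> A"
  shows "prob_space (restrict_space M A)"
  using assms prob_space.emeasure_eq_1_AE prob_space_restrict_space by blast

lemma
  fixes f :: "'x \<Rightarrow> real"
  assumes "A \<in> sets M" "AE x in M. x \<in> A" "integrable M f"
  shows integrable_restrict_space_AE: "integrable (restrict_space M A) f"
    and integral_restrict_space_AE: "(\<integral>x. f x \<partial>restrict_space M A) = (\<integral>x. f x \<partial>M)"
proof -
  have A: "A \<inter> space M \<in> sets M" using assms(1) by simp
  show "integrable (restrict_space M A) f"
    using integrable_mult_indicator[OF assms(1,3)] by (simp add: integrable_restrict_space[OF A])
  have "(\<integral>x. f x \<partial>restrict_space M A) = (\<integral>x. indicator A x * f x \<partial>M)"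
    by (simp add: integral_restrict_space[OF A])
  also have "\<dots> = (\<integral>x. f x \<partial>M)"
    using assms by (intro integral_cong_AE) (auto simp: indicator_def)
  finally show "(\<integral>x. f x \<partial>restrict_space M A) = (\<integral>x. f x \<partial>M)" .
qed

lemma generated_cone_nonneg_functional:
  assumes "finite J" "X \<noteq> {}" "\<forall>v\<in>generated_cone X h. \<exists>j\<in>J. v j \<noteq> 0"
  shows "\<exists>l r. r \<in> J \<and> l r \<noteq> 0 \<and> (\<forall>x\<in>X. 0 \<le> (\<Sum>j\<in>J. l j * h j x))"
proof -
  obtain x0 where "x0 \<in> X" using assms(2) by blast
  then have "J \<noteq> {}" using assms(3) generated_cone_point[of x0 X h] by auto
  have "\<exists>l. (J \<noteq> {} \<longrightarrow> (\<exists>j\<in>J. l j \<noteq> 0)) \<and> (\<forall>v\<in>generated_cone X h. 0 \<le> (\<Sum>j\<in>J. l j * v j))"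
  proof (rule cone_nonneg_functional[OF assms(1)])
    show "\<exists>j\<in>J. v j \<noteq> 0" if "v \<in> generated_cone X h" for v using assms(3) that by blast
  qed (simp_all add: generated_cone_add generated_cone_scale)
  then obtain l where l: "\<exists>j\<in>J. l j \<noteq> 0" "\<forall>v\<in>generated_cone X h. 0 \<le> (\<Sum>j\<in>J. l j * v j)"
    using \<open>J \<noteq> {}\<close> by blast
  have "\<forall>x\<in>X. 0 \<le> (\<Sum>j\<in>J. l j * h j x)"
  proof
    fix x assume "x \<in> X"
    from bspec[OF l(2) generated_cone_point[OF this]] show "0 \<le> (\<Sum>j\<in>J. l j * h j x)" by simp
  qed
  then show ?thesis using l(1) by blast
qed

lemma restrict_to_zero_set_of_nonneg_functional:
  fixes h :: "'j \<Rightarrow> 'x \<Rightarrow> real"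
  assumes "finite J" "prob_space M"
    and int: "\<And>j. j \<in> J \<Longrightarrow> integrable M (h j)" and zero: "\<And>j. j \<in> J \<Longrightarrow> (\<integral>x. h j x \<partial>M) = 0"
    and nonneg: "\<And>x. x \<in> space M \<Longrightarrow> 0 \<le> (\<Sum>j\<in>J. l j * h j x)"
  defines "A \<equiv> {x\<in>space M. (\<Sum>j\<in>J. l j * h j x) = 0}"
  shows "prob_space (restrict_space M A)" "space (restrict_space M A) = A"
    and "\<And>j. j \<in> J \<Longrightarrow> integrable (restrict_space M A) (h j)"
    and "\<And>j. j \<in> J \<Longrightarrow> (\<integral>x. h j x \<partial>restrict_space M A) = 0"
proof -
  define \<phi> where "\<phi> = (\<lambda>x. \<Sum>j\<in>J. l j * h j x)"
  have \<phi>_int: "integrable M \<phi>" using int by (simp add: \<phi>_def)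
  \<comment> \<open>\<open>\<phi>\<close> is nonnegative with integral \<open>0\<close>, so \<open>M\<close> is concentrated on its zero set \<open>A\<close>.\<close>
  have "(\<integral>x. \<phi> x \<partial>M) = 0" using int zero by (simp add: \<phi>_def integral_sum)
  then have "AE x in M. \<phi> x = 0"
    using integral_nonneg_eq_0_iff_AE[OF \<phi>_int] nonneg by (simp add: \<phi>_def)
  then have AE_A: "AE x in M. x \<in> A" by (simp add: A_def \<phi>_def)
  have A: "A \<in> sets M" using borel_measurable_integrable[OF \<phi>_int] by (simp add: A_def \<phi>_def)
  show "prob_space (restrict_space M A)" by (rule prob_space_restrict_space_AE[OF assms(2) A AE_A])
  show "space (restrict_space M A) = A" using A sets.sets_into_space by (auto simp: space_restrict_space)
  show "integrable (restrict_space M A) (h j)" if "j \<in> J" for j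
    using int[OF that] by (rule integrable_restrict_space_AE[OF A AE_A])
  show "(\<integral>x. h j x \<partial>restrict_space M A) = 0" if "j \<in> J" for j
    using integral_restrict_space_AE[OF A AE_A int[OF that]] zero[OF that] by simp
qed

lemma centred_integrals_convex_combination:
  fixes h :: "'j \<Rightarrow> 'x \<Rightarrow> real"
  assumes "finite J" "prob_space M"
    and "\<And>j. j \<in> J \<Longrightarrow> integrable M (h j)" "\<And>j. j \<in> J \<Longrightarrow> (\<integral>x. h j x \<partial>M) = 0"
  shows "\<exists>S \<alpha>. finite S \<and> S \<subseteq> space M \<and> (\<forall>x\<in>S. 0 \<le> \<alpha> x) \<and> sum \<alpha> S = 1 \<and>
           (\<forall>j\<in>J. (\<Sum>x\<in>S. \<alpha> x * h j x) = 0)"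
  using assms
proof (induction J arbitrary: M rule: finite_psubset_induct)
  case (psubset J)
  interpret prob_space M by fact
  show ?case
  proof (cases "\<exists>v\<in>generated_cone (space M) h. \<forall>j\<in>J. v j = 0")
    case True
    then obtain v where "v \<in> generated_cone (space M) h" "\<forall>j\<in>J. v j = 0" by blast
    then show ?thesis by (rule generated_cone_vanishing_imp_convex_combination)
  next
    case False
    then have "\<forall>v\<in>generated_cone (space M) h. \<exists>j\<in>J. v j \<noteq> 0" by blast
    from generated_cone_nonneg_functional[OF psubset.hyps(1) not_empty this]
    obtain l r where l: "r \<in> J" "l r \<noteq> 0" "\<forall>x\<in>space M. 0 \<le> (\<Sum>j\<in>J. l j * h j x)"
      by blast
    define A where "A = {x\<in>space M. (\<Sum>j\<in>J. l j * h j x) = 0}"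
    note restrict = restrict_to_zero_set_of_nonneg_functional[OF psubset.hyps(1) psubset.prems
        bspec[OF l(3)], folded A_def]
    have psub: "J - {r} \<subset> J" using l(1) by auto
    have int: "integrable (restrict_space M A) (h j)" if "j \<in> J - {r}" for j
      using restrict(3) that by blast
    have zero: "(\<integral>x. h j x \<partial>restrict_space M A) = 0" if "j \<in> J - {r}" for j
      using restrict(4) that by blast
    have "\<exists>S \<alpha>. finite S \<and> S \<subseteq> A \<and> (\<forall>x\<in>S. 0 \<le> \<alpha> x) \<and> sum \<alpha> S = 1 \<and>
        (\<forall>j\<in>J - {r}. (\<Sum>x\<in>S. \<alpha> x * h j x) = 0)"
      using psubset.IH[OF psub restrict(1) int zero] by (simp only: restrict(2))
    then obtain S \<alpha> where S: "finite S" "S \<subseteq> A" "\<forall>x\<in>S. 0 \<le> \<alpha> x" "sum \<alpha> S = 1"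
        "\<forall>j\<in>J - {r}. (\<Sum>x\<in>S. \<alpha> x * h j x) = 0"
      by blast
    have vanish: "\<forall>x\<in>S. (\<Sum>j\<in>J. l j * h j x) = 0" using S(2) by (auto simp: A_def)
    have "(\<Sum>x\<in>S. \<alpha> x * h r x) = 0"
      by (rule vanishing_functional_isolates_coordinate[OF psubset.hyps(1) l(1,2) vanish S(5)])
    then have "\<forall>j\<in>J. (\<Sum>x\<in>S. \<alpha> x * h j x) = 0" using S(5) by blast
    then show ?thesis using S(1-4) by (intro exI[of _ S] exI[of _ \<alpha>]) (auto simp: A_def)
  qed
qed

lemma integrals_convex_combination:
  fixes h :: "'j \<Rightarrow> 'x \<Rightarrow> real"
  assumes "finite J" "prob_space M" "\<And>j. j \<in> J \<Longrightarrow> integrable M (h j)"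
  shows "\<exists>S \<alpha>. finite S \<and> S \<subseteq> space M \<and> (\<forall>x\<in>S. 0 \<le> \<alpha> x) \<and> sum \<alpha> S = 1 \<and>
           (\<forall>j\<in>J. (\<Sum>x\<in>S. \<alpha> x * h j x) = (\<integral>x. h j x \<partial>M))"
proof -
  interpret prob_space M by fact
  define m where "m j = (\<integral>x. h j x \<partial>M)" for j
  obtain S \<alpha> where S: "finite S" "S \<subseteq> space M" "\<forall>x\<in>S. 0 \<le> \<alpha> x" "sum \<alpha> S = 1"
      "\<forall>j\<in>J. (\<Sum>x\<in>S. \<alpha> x * (h j x - m j)) = 0"
    using centred_integrals_convex_combination[of J M "\<lambda>j x. h j x - m j"] assms
    by (auto simp: m_def prob_space)
  have "(\<Sum>x\<in>S. \<alpha> x * (h j x - m j)) = (\<Sum>x\<in>S. \<alpha> x * h j x) - m j" for j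
    using S(4) by (simp add: right_diff_distrib sum_subtractf sum_distrib_right[symmetric])
  then show ?thesis using S by (intro exI[of _ S] exI[of _ \<alpha>]) (simp add: m_def)
qed

section \<open>Finitely supported measures and truncation\<close>

lemma nn_integral_finite_atoms:
  fixes D :: "'b measure" and p :: "nat \<Rightarrow> 'b" and \<alpha> :: "nat \<Rightarrow> real"
  assumes \<alpha>: "\<forall>i\<le>n. \<alpha> i \<ge> 0" and p: "\<forall>i\<le>n. p i \<in> space D"
    and em: "\<forall>S\<in>sets D. emeasure D S = ennreal (\<Sum>i\<le>n. \<alpha> i * indicator S (p i))"
    and u: "u \<in> borel_measurable D"
  shows "(\<integral>\<^sup>+x. u x \<partial>D) = (\<Sum>i\<le>n. ennreal (\<alpha> i) * u (p i))"
  using u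
proof (induct rule: borel_measurable_induct)
  case (cong f g)
  have "(\<integral>\<^sup>+x. f x \<partial>D) = (\<integral>\<^sup>+x. g x \<partial>D)" using cong by (intro nn_integral_cong) auto
  also have "\<dots> = (\<Sum>i\<le>n. ennreal (\<alpha> i) * g (p i))" by fact
  also have "\<dots> = (\<Sum>i\<le>n. ennreal (\<alpha> i) * f (p i))" using cong p by (intro sum.cong) auto
  finally show ?case .
next
  case (set A)
  have "(\<integral>\<^sup>+x. indicator A x \<partial>D) = ennreal (\<Sum>i\<le>n. \<alpha> i * indicator A (p i))"
    using set em by simp
  also have "\<dots> = (\<Sum>i\<le>n. ennreal (\<alpha> i * indicator A (p i)))"
    using \<alpha> by (subst sum_ennreal) auto
  also have "\<dots> = (\<Sum>i\<le>n. ennreal (\<alpha> i) * indicator A (p i))"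
    using \<alpha> by (intro sum.cong) (auto simp: indicator_def)
  finally show ?case .
next
  case (mult u c)
  then show ?case by (simp add: nn_integral_cmult sum_distrib_left mult.left_commute)
next
  case (add u v)
  then show ?case by (simp add: nn_integral_add sum.distrib distrib_left)
next
  case (seq U)
  have "(\<integral>\<^sup>+x. (SUP i. U i) x \<partial>D) = (\<integral>\<^sup>+x. (SUP i. U i x) \<partial>D)" by (simp only: SUP_apply)
  also have "\<dots> = (SUP i. integral\<^sup>N D (U i))"
    using seq by (intro nn_integral_monotone_convergence_SUP) auto
  also have "\<dots> = (SUP i. \<Sum>k\<le>n. ennreal (\<alpha> k) * U i (p k))" using seq by simp
  also have "\<dots> = (\<Sum>k\<le>n. SUP i. ennreal (\<alpha> k) * U i (p k))"
  proof (rule ennreal_SUP_sum)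
    fix k show "incseq (\<lambda>i. ennreal (\<alpha> k) * U i (p k))"
      using seq(4) unfolding incseq_def le_fun_def by (auto intro: mult_left_mono)
  qed
  also have "\<dots> = (\<Sum>k\<le>n. ennreal (\<alpha> k) * (SUP i. U i) (p k))"
    by (simp only: SUP_mult_left_ennreal SUP_apply)
  finally show ?case .
qed

lemma ereal_expect_integrable:
  fixes f :: "'x \<Rightarrow> real"
  assumes "integrable M f"
  shows "ereal_expect M f = ereal (\<integral>x. f x \<partial>M)"
proof -
  have fin: "(\<integral>\<^sup>+x. ennreal (f x) \<partial>M) \<noteq> \<infinity>" "(\<integral>\<^sup>+x. ennreal (- f x) \<partial>M) \<noteq> \<infinity>"
    using assms by (auto simp: real_integrable_def)
  obtain p where p: "(\<integral>\<^sup>+x. ennreal (f x) \<partial>M) = ennreal p" "0 \<le> p"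
    using fin(1) by (cases "\<integral>\<^sup>+x. ennreal (f x) \<partial>M" rule: ennreal_cases) auto
  obtain q where q: "(\<integral>\<^sup>+x. ennreal (- f x) \<partial>M) = ennreal q" "0 \<le> q"
    using fin(2) by (cases "\<integral>\<^sup>+x. ennreal (- f x) \<partial>M" rule: ennreal_cases) auto
  have "(\<integral>x. f x \<partial>M) = p - q" using real_lebesgue_integral_def[OF assms] p q by simp
  then show ?thesis using p q by (simp add: ereal_expect_def)
qed

lemma integral_finite_atoms:
  fixes D :: "'b measure" and p :: "nat \<Rightarrow> 'b" and \<alpha> :: "nat \<Rightarrow> real"
  assumes \<alpha>: "\<forall>i\<le>n. \<alpha> i \<ge> 0" and p: "\<forall>i\<le>n. p i \<in> space D"
    and em: "\<forall>S\<in>sets D. emeasure D S = ennreal (\<Sum>i\<le>n. \<alpha> i * indicator S (p i))"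
    and f: "f \<in> borel_measurable D"
  shows "integrable D f" "(\<integral>x. f x \<partial>D) = (\<Sum>i\<le>n. \<alpha> i * f (p i))"
proof -
  have pos_part: "(\<integral>\<^sup>+x. ennreal (F x) \<partial>D) = ennreal (\<Sum>i\<le>n. \<alpha> i * max 0 (F (p i)))"
    if F: "F \<in> borel_measurable D" for F
  proof -
    have "(\<integral>\<^sup>+x. ennreal (F x) \<partial>D) = (\<Sum>i\<le>n. ennreal (\<alpha> i) * ennreal (F (p i)))"
      using F by (intro nn_integral_finite_atoms[OF \<alpha> p em]) auto
    also have "\<dots> = (\<Sum>i\<le>n. ennreal (\<alpha> i * max 0 (F (p i))))"
      using \<alpha> by (intro sum.cong refl) (simp add: ennreal_mult ennreal_max_0)
    also have "\<dots> = ennreal (\<Sum>i\<le>n. \<alpha> i * max 0 (F (p i)))"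
      using \<alpha> by (subst sum_ennreal) auto
    finally show ?thesis .
  qed
  have P: "(\<integral>\<^sup>+x. ennreal (f x) \<partial>D) = ennreal (\<Sum>i\<le>n. \<alpha> i * max 0 (f (p i)))"
    using pos_part f by blast
  have N: "(\<integral>\<^sup>+x. ennreal (- f x) \<partial>D) = ennreal (\<Sum>i\<le>n. \<alpha> i * max 0 (- f (p i)))"
    using pos_part[of "\<lambda>x. - f x"] f by auto
  show int: "integrable D f" unfolding real_integrable_def using f P N by simp
  have "(\<Sum>i\<le>n. \<alpha> i * max 0 (f (p i))) - (\<Sum>i\<le>n. \<alpha> i * max 0 (- f (p i))) = (\<Sum>i\<le>n. \<alpha> i * f (p i))"
    unfolding sum_subtractf[symmetric] by (intro sum.cong refl) (simp add: right_diff_distrib[symmetric] max_def)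
  moreover have "0 \<le> (\<Sum>i\<le>n. \<alpha> i * max 0 (f (p i)))" "0 \<le> (\<Sum>i\<le>n. \<alpha> i * max 0 (- f (p i)))"
    using \<alpha> by (auto intro!: sum_nonneg)
  ultimately show "(\<integral>x. f x \<partial>D) = (\<Sum>i\<le>n. \<alpha> i * f (p i))"
    using real_lebesgue_integral_def[OF int] P N by simp
qed

lemma nn_integral_bounded_above_finite:
  fixes f :: "'x \<Rightarrow> real"
  assumes "prob_space M" "\<forall>x. f x \<le> C"
  shows "(\<integral>\<^sup>+x. ennreal (f x) \<partial>M) < \<infinity>"
proof -
  have "(\<integral>\<^sup>+x. ennreal (f x) \<partial>M) \<le> (\<integral>\<^sup>+x. ennreal C \<partial>M)"
    using assms(2) by (intro nn_integral_mono) (auto intro: ennreal_leI)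
  also have "\<dots> = ennreal C" using prob_space.emeasure_space_1[OF assms(1)] by simp
  finally show ?thesis using le_less_trans by fastforce
qed

lemma nn_integral_truncation_unbounded:
  fixes f :: "'x \<Rightarrow> real"
  assumes f: "f \<in> borel_measurable M" and infinite: "(\<integral>\<^sup>+x. ennreal (f x) \<partial>M) = \<infinity>"
  shows "\<exists>k::nat. ennreal t < (\<integral>\<^sup>+x. ennreal (min (f x) k) \<partial>M)"
proof -
  define U where "U = (\<lambda>k x. ennreal (min (f x) (real k)))"
  have sup: "(SUP k. U k x) = ennreal (f x)" for x
  proof (rule antisym)
    show "(SUP k. U k x) \<le> ennreal (f x)" by (auto simp: U_def intro!: SUP_least ennreal_leI)
    have "U (nat \<lceil>f x\<rceil>) x = ennreal (f x)"
      using real_nat_ceiling_ge[of "f x"] by (simp add: U_def min_absorb1)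
    then show "ennreal (f x) \<le> (SUP k. U k x)" by (metis UNIV_I SUP_upper)
  qed
  have "incseq U" by (auto simp: incseq_def le_fun_def U_def intro!: ennreal_leI)
  moreover have "U k \<in> borel_measurable M" for k unfolding U_def using f by measurable
  ultimately have "(\<integral>\<^sup>+x. (SUP k. U k x) \<partial>M) = (SUP k. integral\<^sup>N M (U k))"
    by (rule nn_integral_monotone_convergence_SUP)
  then have "ennreal t < (SUP k. integral\<^sup>N M (U k))" using infinite by (simp add: sup)
  then show ?thesis by (auto simp: less_SUP_iff U_def)
qed

lemma truncation_integrable:
  fixes f :: "'x \<Rightarrow> real" and k :: nat
  assumes M: "prob_space M" and f: "f \<in> borel_measurable M" and C: "\<forall>x. C \<le> f x"
  defines "\<psi> \<equiv> \<lambda>x. min (f x) (real k)"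
  shows "integrable M \<psi>" and "(\<integral>\<^sup>+x. ennreal (\<psi> x) \<partial>M) \<le> ennreal ((\<integral>x. \<psi> x \<partial>M) + \<bar>C\<bar>)"
proof -
  have "(\<integral>\<^sup>+x. ennreal (\<psi> x) \<partial>M) < \<infinity>"
    by (rule nn_integral_bounded_above_finite[OF M, of _ "real k"]) (simp add: \<psi>_def)
  then obtain p where p: "(\<integral>\<^sup>+x. ennreal (\<psi> x) \<partial>M) = ennreal p" "0 \<le> p"
    by (cases "\<integral>\<^sup>+x. ennreal (\<psi> x) \<partial>M" rule: ennreal_cases) auto
  have "(\<integral>\<^sup>+x. ennreal (- \<psi> x) \<partial>M) \<le> (\<integral>\<^sup>+x. ennreal \<bar>C\<bar> \<partial>M)"
  proof (intro nn_integral_mono ennreal_leI)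
    show "- \<psi> x \<le> \<bar>C\<bar>" for x using spec[OF C, of x] by (auto simp: \<psi>_def min_def)
  qed
  also have "\<dots> = ennreal \<bar>C\<bar>" using prob_space.emeasure_space_1[OF M] by simp
  finally obtain q where q: "(\<integral>\<^sup>+x. ennreal (- \<psi> x) \<partial>M) = ennreal q" "0 \<le> q" "q \<le> \<bar>C\<bar>"
    by (cases "\<integral>\<^sup>+x. ennreal (- \<psi> x) \<partial>M" rule: ennreal_cases) (auto simp: top_unique)
  have "\<psi> \<in> borel_measurable M" unfolding \<psi>_def using f by measurable
  then show int: "integrable M \<psi>" using p q by (simp add: real_integrable_def)
  have "(\<integral>x. \<psi> x \<partial>M) = p - q" using real_lebesgue_integral_def[OF int] p q by simp
  then show "(\<integral>\<^sup>+x. ennreal (\<psi> x) \<partial>M) \<le> ennreal ((\<integral>x. \<psi> x \<partial>M) + \<bar>C\<bar>)"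
    using p q by (simp add: ennreal_leI)
qed

lemma nonintegrable_expectation_above_real:
  fixes f :: "'x \<Rightarrow> real"
  assumes M: "prob_space M" and f: "f \<in> borel_measurable M"
    and semibounded: "(\<exists>C. \<forall>x. f x \<le> C) \<or> (\<exists>C. \<forall>x. C \<le> f x)"
    and "\<not> integrable M f" and c: "ereal c < ereal_expect M f"
  shows "(\<exists>C. \<forall>x. C \<le> f x) \<and> (\<integral>\<^sup>+x. ennreal (f x) \<partial>M) = \<infinity>"
proof -
  define P where "P = (\<integral>\<^sup>+x. ennreal (f x) \<partial>M)"
  define N where "N = (\<integral>\<^sup>+x. ennreal (- f x) \<partial>M)"
  have "N \<noteq> \<infinity>"
  proof
    assume "N = \<infinity>"
    have "\<not> (\<exists>C. \<forall>x. C \<le> f x)"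
    proof
      assume "\<exists>C. \<forall>x. C \<le> f x"
      then obtain C where "\<forall>x. - f x \<le> - C" by auto
      from nn_integral_bounded_above_finite[OF M this] show False using \<open>N = \<infinity>\<close> by (simp add: N_def)
    qed
    then obtain C where "\<forall>x. f x \<le> C" using semibounded by blast
    then have "P < \<infinity>" unfolding P_def by (rule nn_integral_bounded_above_finite[OF M])
    then obtain p where "P = ennreal p" "0 \<le> p" by (cases P rule: ennreal_cases) auto
    then show False using c \<open>N = \<infinity>\<close> by (simp add: ereal_expect_def P_def N_def)
  qed
  then have "P = \<infinity>" using assms(4) f by (auto simp: real_integrable_def P_def N_def)
  moreover have "\<not> (\<exists>C. \<forall>x. f x \<le> C)"
  proof
    assume "\<exists>C. \<forall>x. f x \<le> C"
    then obtain C where "\<forall>x. f x \<le> C" by blast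
    from nn_integral_bounded_above_finite[OF M this] show False using \<open>P = \<infinity>\<close> by (simp add: P_def)
  qed
  ultimately show ?thesis using semibounded unfolding P_def by blast
qed

lemma exists_integrable_minorant:
  fixes f :: "'x \<Rightarrow> real"
  assumes M: "prob_space M" and f: "f \<in> borel_measurable M"
    and semibounded: "(\<exists>C. \<forall>x. f x \<le> C) \<or> (\<exists>C. \<forall>x. C \<le> f x)"
    and c: "ereal c < ereal_expect M f"
  shows "\<exists>\<psi>. integrable M \<psi> \<and> (\<forall>x. \<psi> x \<le> f x) \<and> c < (\<integral>x. \<psi> x \<partial>M)"
proof (cases "integrable M f")
  case True
  then show ?thesis using c ereal_expect_integrable[OF True] by (intro exI[of _ f]) auto
next
  case False
  then obtain C where C: "\<forall>x. C \<le> f x" and infinite: "(\<integral>\<^sup>+x. ennreal (f x) \<partial>M) = \<infinity>"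
    using nonintegrable_expectation_above_real[OF M f semibounded _ c] by blast
  obtain k :: nat where k: "ennreal (\<bar>c\<bar> + \<bar>C\<bar>) < (\<integral>\<^sup>+x. ennreal (min (f x) k) \<partial>M)"
    using nn_integral_truncation_unbounded[OF f infinite] by blast
  note truncation = truncation_integrable[OF M f C, of k]
  have "ennreal (\<bar>c\<bar> + \<bar>C\<bar>) < ennreal ((\<integral>x. min (f x) k \<partial>M) + \<bar>C\<bar>)"
    using k truncation(2) by (rule less_le_trans)
  then have "c < (\<integral>x. min (f x) k \<partial>M)" by (simp add: ennreal_less_iff del: ennreal_plus)
  then show ?thesis using truncation(1) by (intro exI[of _ "\<lambda>x. min (f x) k"]) auto
qed

section \<open>The moment problem\<close>

lemma finite_support_moment_reduction:
  fixes \<psi> :: "'x \<Rightarrow> real" and a :: "nat \<Rightarrow> 'x \<Rightarrow> real"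
  assumes M: "prob_space M" and \<psi>: "integrable M \<psi>"
    and a: "\<And>j. j \<in> {1..n} \<Longrightarrow> integrable M (a j)"
  shows "\<exists>alpha mu. (\<forall>i\<le>n. 0 \<le> alpha i) \<and> (\<forall>i\<le>n. mu i \<in> space M) \<and> (\<Sum>i\<le>n. alpha i) = 1 \<and>
           (\<forall>j\<in>{1..n}. (\<Sum>i\<le>n. alpha i * a j (mu i)) = (\<integral>x. a j x \<partial>M)) \<and>
           (\<integral>x. \<psi> x \<partial>M) \<le> (\<Sum>i\<le>n. alpha i * \<psi> (mu i))"
proof -
  define h where "h = (\<lambda>j. if j = 0 then \<psi> else a j)"
  have "integrable M (h j)" if "j \<in> {0..n}" for j
  proof (cases "j = 0")
    case False
    with that a show ?thesis by (simp add: h_def)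
  qed (simp add: h_def \<psi>)
  from integrals_convex_combination[where J = "{0..n}" and h = h, OF finite_atLeastAtMost M this]
  obtain S \<alpha> where S: "finite S" "S \<subseteq> space M" "\<forall>x\<in>S. 0 \<le> \<alpha> x" "sum \<alpha> S = 1"
      "\<forall>j\<in>{0..n}. (\<Sum>x\<in>S. \<alpha> x * h j x) = (\<integral>x. h j x \<partial>M)"
    by blast
  obtain S' \<beta> where S': "S' \<subseteq> S" "card S' \<le> Suc n" "\<forall>x\<in>S'. 0 \<le> \<beta> x" "sum \<beta> S' = 1"
      "\<forall>j\<in>{1..n}. (\<Sum>x\<in>S'. \<beta> x * a j x) = (\<Sum>x\<in>S. \<alpha> x * a j x)"
      "(\<Sum>x\<in>S. \<alpha> x * \<psi> x) \<le> (\<Sum>x\<in>S'. \<beta> x * \<psi> x)"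
    using caratheodory_reduction[of "{1..n}" S \<alpha> a \<psi>] S(1,3,4) by auto
  have "finite S'" using S'(1) S(1) by (rule finite_subset)
  moreover have "S' \<noteq> {}" using S'(4) by auto
  ultimately obtain mu alpha where atoms: "\<forall>i\<le>n. 0 \<le> alpha i" "\<forall>i\<le>n. mu i \<in> S'"
      "\<And>F. (\<Sum>i\<le>n. alpha i * F (mu i)) = (\<Sum>x\<in>S'. \<beta> x * F x)"
    using weighted_sum_reindex_atMost[OF _ _ S'(2,3)] by metis
  have "(\<Sum>i\<le>n. alpha i) = 1" using atoms(3)[of "\<lambda>_. 1"] S'(4) by simp
  moreover have "(\<Sum>i\<le>n. alpha i * a j (mu i)) = (\<integral>x. a j x \<partial>M)" if j: "j \<in> {1..n}" for j
  proof -
    have "(\<Sum>x\<in>S. \<alpha> x * h j x) = (\<integral>x. h j x \<partial>M)" using S(5) j by simp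
    moreover have "h j = a j" using j by (simp add: h_def)
    ultimately show ?thesis using atoms(3)[of "a j"] S'(5) j by simp
  qed
  moreover have "(\<integral>x. \<psi> x \<partial>M) \<le> (\<Sum>i\<le>n. alpha i * \<psi> (mu i))"
    using atoms(3)[of \<psi>] S'(6) S(5)[rule_format, of 0] by (simp add: h_def)
  ultimately show ?thesis using atoms(1,2) S'(1) S(2) by blast
qed

lemma finite_atoms_borel_prob:
  fixes mu :: "nat \<Rightarrow> 'a::topological_space" and alpha :: "nat \<Rightarrow> real"
  assumes alpha: "\<forall>i\<le>n. 0 \<le> alpha i" "(\<Sum>i\<le>n. alpha i) = 1"
  shows "\<exists>pi\<in>borel_probs. \<forall>S\<in>sets borel. emeasure pi S = ennreal (\<Sum>i\<le>n. alpha i * indicator S (mu i))"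
proof -
  define xs where "xs = map (\<lambda>i. (mu i, alpha i)) [0..<Suc n]"
  have list_sum: "sum_list (map f [0..<Suc n]) = (\<Sum>i\<le>n. f i)" for f :: "nat \<Rightarrow> real"
    by (simp only: interv_sum_list_conv_sum_set_nat set_upt atLeast0LessThan lessThan_Suc_atMost)
  have wf: "pmf_of_list_wf xs"
  proof (rule pmf_of_list_wfI)
    have snd_xs: "map snd xs = map alpha [0..<Suc n]" by (simp add: xs_def del: upt_Suc)
    show "sum_list (map snd xs) = 1" by (simp only: snd_xs list_sum alpha(2))
    show "0 \<le> x" if "x \<in> set (map snd xs)" for x
      using that alpha(1) by (auto simp: snd_xs simp del: upt_Suc)
  qed
  define pi where "pi = distr (measure_pmf (pmf_of_list xs)) borel id"
  have "pi \<in> borel_probs"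
    by (simp add: pi_def borel_probs_def prob_space.prob_space_distr prob_space_measure_pmf)
  moreover have "emeasure pi S = ennreal (\<Sum>i\<le>n. alpha i * indicator S (mu i))" if "S \<in> sets borel" for S
  proof -
    have "emeasure pi S = ennreal (sum_list (map snd (filter (\<lambda>x. fst x \<in> S) xs)))"
      using that emeasure_pmf_of_list[OF wf] by (simp add: pi_def emeasure_distr)
    also have "sum_list (map snd (filter (\<lambda>x. fst x \<in> S) xs)) = (\<Sum>i\<le>n. alpha i * indicator S (mu i))"
    proof -
      have "(\<lambda>x. if fst x \<in> S then snd x else 0) \<circ> (\<lambda>i. (mu i, alpha i))
          = (\<lambda>i. alpha i * indicator S (mu i))" by (auto simp: indicator_def)
      then show ?thesis by (simp add: sum_list_map_filter' xs_def list_sum[symmetric] del: upt_Suc)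
    qed
    finally show ?thesis .
  qed
  ultimately show ?thesis by blast
qed

locale moment_problem =
  fixes Phi :: "'a::topological_space \<Rightarrow> real" and Psi :: "'a \<Rightarrow> 'q::topological_space"
    and g :: "nat \<Rightarrow> 'q \<Rightarrow> real" and I :: "nat \<Rightarrow> real set" and n :: nat
  assumes Phi_meas: "Phi \<in> borel_measurable borel"
    and Psi_meas: "Psi \<in> borel \<rightarrow>\<^sub>M borel"
    and g_meas: "\<And>j. j \<in> {1..n} \<Longrightarrow> g j \<in> borel_measurable borel"
begin

definition discrete_values :: "ereal set" where
  "discrete_values = {ereal (\<Sum>i\<le>n. alpha i * Phi (mu i)) | alpha mu.
      (\<forall>i\<le>n. alpha i \<ge> 0) \<and> (\<Sum>i\<le>n. alpha i) = 1 \<and>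
      (\<forall>j\<in>{1..n}. (\<Sum>i\<le>n. alpha i * g j (Psi (mu i))) \<in> I j)}"

lemma
  assumes "sets \<pi> = sets borel"
  shows Psi_measurable_on: "Psi \<in> \<pi> \<rightarrow>\<^sub>M borel"
    and Phi_measurable_on: "Phi \<in> borel_measurable \<pi>"
    and moment_measurable_on: "j \<in> {1..n} \<Longrightarrow> (\<lambda>x. g j (Psi x)) \<in> borel_measurable \<pi>"
  using Psi_meas Phi_meas measurable_compose[OF _ g_meas, of Psi \<pi> j]
  by (simp_all add: measurable_cong_sets[OF assms refl])

lemma PiI_iff:
  "\<pi> \<in> PiI n Psi g I \<longleftrightarrow> \<pi> \<in> borel_probs \<and>
     (\<forall>j\<in>{1..n}. integrable \<pi> (\<lambda>x. g j (Psi x)) \<and> (\<integral>x. g j (Psi x) \<partial>\<pi>) \<in> I j)"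
proof (cases "\<pi> \<in> borel_probs")
  case True
  then have sets: "sets \<pi> = sets borel" and "prob_space \<pi>" by (auto simp: borel_probs_def)
  then have "distr \<pi> borel Psi \<in> borel_probs"
    by (simp add: borel_probs_def prob_space.prob_space_distr Psi_measurable_on)
  then show ?thesis
    using True integrable_distr_eq[OF Psi_measurable_on[OF sets] g_meas]
      integral_distr[OF Psi_measurable_on[OF sets] g_meas]
    by (auto simp: PiI_def Qfrak_def)
qed (simp add: PiI_def)

lemma finite_atoms_on_space:
  assumes "sets \<pi> = sets borel" "\<forall>S\<in>sets borel. emeasure \<pi> S = ennreal (\<Sum>i\<le>n. alpha i * indicator S (mu i))"
  shows "\<forall>i\<le>n. mu i \<in> space \<pi>" "\<forall>S\<in>sets \<pi>. emeasure \<pi> S = ennreal (\<Sum>i\<le>n. alpha i * indicator S (mu i))"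
  using assms sets_eq_imp_space_eq[OF assms(1)] by auto

lemma expectations_Delta:
  assumes "\<pi> \<in> PiI n Psi g I \<inter> Delta n"
  shows "ereal_expect \<pi> Phi \<in> discrete_values"
proof -
  have \<pi>: "sets \<pi> = sets borel" "prob_space \<pi>"
    "\<forall>j\<in>{1..n}. integrable \<pi> (\<lambda>x. g j (Psi x)) \<and> (\<integral>x. g j (Psi x) \<partial>\<pi>) \<in> I j"
    using assms by (auto simp: PiI_iff borel_probs_def)
  obtain mu alpha where alpha: "\<forall>i\<le>n. 0 \<le> alpha i"
    and em: "\<forall>S\<in>sets borel. emeasure \<pi> S = ennreal (\<Sum>i\<le>n. alpha i * indicator S (mu i))"
    using assms unfolding Delta_def by blast
  note atoms = alpha finite_atoms_on_space[OF \<pi>(1) em]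
  have "emeasure \<pi> UNIV = ennreal (\<Sum>i\<le>n. alpha i)" using em[rule_format, of UNIV] by simp
  moreover have "emeasure \<pi> UNIV = 1"
    using prob_space.emeasure_space_1[OF \<pi>(2)] sets_eq_imp_space_eq[OF \<pi>(1)] by simp
  ultimately have "ennreal (\<Sum>i\<le>n. alpha i) = 1" by simp
  then have "(\<Sum>i\<le>n. alpha i) = 1" using alpha by (simp add: sum_nonneg)
  moreover have "(\<Sum>i\<le>n. alpha i * g j (Psi (mu i))) \<in> I j" if "j \<in> {1..n}" for j
    using bspec[OF \<pi>(3) that] integral_finite_atoms(2)[OF atoms moment_measurable_on[OF \<pi>(1) that]] by simp
  moreover have "ereal_expect \<pi> Phi = ereal (\<Sum>i\<le>n. alpha i * Phi (mu i))"
    using integral_finite_atoms[OF atoms Phi_measurable_on[OF \<pi>(1)]] by (simp add: ereal_expect_integrable)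
  ultimately show ?thesis
    unfolding discrete_values_def using alpha by (intro CollectI exI[of _ alpha] exI[of _ mu]) auto
qed

lemma discrete_values_attained:
  assumes "v \<in> discrete_values"
  shows "\<exists>\<pi>\<in>PiI n Psi g I \<inter> Delta n. ereal_expect \<pi> Phi = v"
proof -
  obtain alpha mu where alpha: "\<forall>i\<le>n. 0 \<le> alpha i" "(\<Sum>i\<le>n. alpha i) = 1"
    and moments: "\<forall>j\<in>{1..n}. (\<Sum>i\<le>n. alpha i * g j (Psi (mu i))) \<in> I j"
    and v: "v = ereal (\<Sum>i\<le>n. alpha i * Phi (mu i))"
    using assms unfolding discrete_values_def by blast
  obtain \<pi> where \<pi>: "\<pi> \<in> borel_probs"
    and em: "\<forall>S\<in>sets borel. emeasure \<pi> S = ennreal (\<Sum>i\<le>n. alpha i * indicator S (mu i))"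
    using finite_atoms_borel_prob[OF alpha] by blast
  have sets: "sets \<pi> = sets borel" using \<pi> by (simp add: borel_probs_def)
  note atoms = alpha(1) finite_atoms_on_space[OF sets em]
  have "\<pi> \<in> Delta n" using sets alpha(1) em by (auto simp: Delta_def)
  moreover have "\<pi> \<in> PiI n Psi g I"
    using \<pi> moments integral_finite_atoms[OF atoms moment_measurable_on[OF sets]] by (simp add: PiI_iff)
  moreover have "ereal_expect \<pi> Phi = v"
    using integral_finite_atoms[OF atoms Phi_measurable_on[OF sets]] v by (simp add: ereal_expect_integrable)
  ultimately show ?thesis by blast
qed

lemma U_val_Delta: "U_val Phi (PiI n Psi g I \<inter> Delta n) = Sup discrete_values"
proof -
  have "(\<lambda>\<pi>. ereal_expect \<pi> Phi) ` (PiI n Psi g I \<inter> Delta n) = discrete_values"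
    using expectations_Delta discrete_values_attained by blast
  then show ?thesis by (simp add: U_val_def)
qed

lemma expectation_le_Sup_discrete_values:
  assumes semibounded: "(\<exists>c. \<forall>x. Phi x \<le> c) \<or> (\<exists>c. \<forall>x. c \<le> Phi x)"
    and \<pi>: "\<pi> \<in> PiI n Psi g I"
  shows "ereal_expect \<pi> Phi \<le> Sup discrete_values"
proof (rule dense_le)
  fix y assume y: "y < ereal_expect \<pi> Phi"
  have sets: "sets \<pi> = sets borel" and prob: "prob_space \<pi>"
    and moments: "\<forall>j\<in>{1..n}. integrable \<pi> (\<lambda>x. g j (Psi x)) \<and> (\<integral>x. g j (Psi x) \<partial>\<pi>) \<in> I j"
    using \<pi> by (auto simp: PiI_iff borel_probs_def)
  show "y \<le> Sup discrete_values"
  proof (cases y)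
    case (real c)
    obtain \<psi> where \<psi>: "integrable \<pi> \<psi>" "\<forall>x. \<psi> x \<le> Phi x" "c < (\<integral>x. \<psi> x \<partial>\<pi>)"
      using exists_integrable_minorant[OF prob Phi_measurable_on[OF sets] semibounded] y real by blast
    have "integrable \<pi> (\<lambda>x. g j (Psi x))" if "j \<in> {1..n}" for j using moments that by blast
    from finite_support_moment_reduction[where a = "\<lambda>j x. g j (Psi x)", OF prob \<psi>(1) this]
    obtain alpha mu where alpha: "\<forall>i\<le>n. 0 \<le> alpha i" "(\<Sum>i\<le>n. alpha i) = 1"
      and same_moments: "\<forall>j\<in>{1..n}. (\<Sum>i\<le>n. alpha i * g j (Psi (mu i))) = (\<integral>x. g j (Psi x) \<partial>\<pi>)"
      and \<psi>_le: "(\<integral>x. \<psi> x \<partial>\<pi>) \<le> (\<Sum>i\<le>n. alpha i * \<psi> (mu i))"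
      by blast
    have "ereal (\<Sum>i\<le>n. alpha i * Phi (mu i)) \<in> discrete_values"
      unfolding discrete_values_def using alpha same_moments moments
      by (intro CollectI exI[of _ alpha] exI[of _ mu]) auto
    have "(\<Sum>i\<le>n. alpha i * \<psi> (mu i)) \<le> (\<Sum>i\<le>n. alpha i * Phi (mu i))"
      using alpha(1) \<psi>(2) by (intro sum_mono mult_left_mono) auto
    then have "y \<le> ereal (\<Sum>i\<le>n. alpha i * Phi (mu i))" using real \<psi>(3) \<psi>_le by simp
    also have "\<dots> \<le> Sup discrete_values" by (rule Sup_upper) fact
    finally show ?thesis .
  qed (use y in auto)
qed

end

theorem theorem3p4:
  fixes Phi :: "'a::t2_space \<Rightarrow> real"
    and Psi :: "'a \<Rightarrow> 'q::topological_space"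
    and f :: "'p::polish_space \<Rightarrow> 'a"
    and g :: "nat \<Rightarrow> 'q \<Rightarrow> real"
    and I :: "nat \<Rightarrow> real set"
    and n :: nat
  assumes suslin: "continuous_on UNIV f" "surj f"
    and Phi_meas: "Phi \<in> borel_measurable borel"
    and Phi_semibdd: "(\<exists>c. \<forall>x. Phi x \<le> c) \<or> (\<exists>c. \<forall>x. c \<le> Phi x)"
    and Q_metrizable: "metrizable_space (euclidean :: 'q topology)"
    and Q_separable: "separable_space (euclidean :: 'q topology)"
    and Psi_meas: "Psi \<in> borel \<rightarrow>\<^sub>M borel"
    and g_meas: "\<And>j. j \<in> {1..n} \<Longrightarrow> g j \<in> borel_measurable borel"
    and I_int: "\<And>j. j \<in> {1..n} \<Longrightarrow> closed_interval (I j)"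
  shows "U_val Phi (PiI n Psi g I) = U_val Phi (PiI n Psi g I \<inter> Delta n)
       \<and> U_val Phi (PiI n Psi g I \<inter> Delta n) =
           Sup {ereal (\<Sum>i\<le>n. alpha i * Phi (mu i)) | alpha mu.
                  (\<forall>i\<le>n. alpha i \<ge> 0) \<and> (\<Sum>i\<le>n. alpha i) = 1 \<and>
                  (\<forall>j\<in>{1..n}. (\<Sum>i\<le>n. alpha i * g j (Psi (mu i))) \<in> I j)}"
proof -
  interpret moment_problem Phi Psi g I n
    using Phi_meas Psi_meas g_meas by unfold_locales
  have "U_val Phi (PiI n Psi g I) \<le> U_val Phi (PiI n Psi g I \<inter> Delta n)"
    unfolding U_val_Delta unfolding U_val_def
    by (rule SUP_least) (rule expectation_le_Sup_discrete_values[OF Phi_semibdd])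
  moreover have "U_val Phi (PiI n Psi g I \<inter> Delta n) \<le> U_val Phi (PiI n Psi g I)"
    unfolding U_val_def by (rule SUP_subset_mono) auto
  ultimately show ?thesis using U_val_Delta by (simp add: discrete_values_def)
qed

end
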